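(* If $G$ is a graph with minimum degree $\delta(G)\ge 2$, then $\Gamma_{\rm cer}(G)\le\Gamma(G)$.
   Context: All graphs are finite and simple; $\delta(G)$ is the minimum degree. A set $D\subseteq V_G$ is a dominating set of $G$ if every vertex of $V_G-D$ has a neighbor in $D$; $\Gamma(G)$ is the maximum cardinality of a minimal (with respect to inclusion) dominating set. A set $D$ is a certified dominating set of $G$ if $D$ is dominating and every vertex of $D$ has either zero or at least two neighbors in $V_G-D$; $\Gamma_{\rm cer}(G)$ is the maximum cardinality of a minimal (with respect to inclusion) certified dominating set. *)

theory Defs
  imports Main
begin

definition simple_graph :: "'a set \<Rightarrow> ('a \<Rightarrow> 'a \<Rightarrow> bool) \<Rightarrow> bool" where
  "simple_graph V E \<longleftrightarrow> finite V \<and> (\<forall>u v. E u v \<longrightarrow> u \<in> V \<and> v \<in> V)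
     \<and> (\<forall>u v. E u v \<longrightarrow> E v u) \<and> (\<forall>v. \<not> E v v)"

definition neighbors :: "'a set \<Rightarrow> ('a \<Rightarrow> 'a \<Rightarrow> bool) \<Rightarrow> 'a \<Rightarrow> 'a set" where
  "neighbors V E v = {u \<in> V. E v u}"

definition degree :: "'a set \<Rightarrow> ('a \<Rightarrow> 'a \<Rightarrow> bool) \<Rightarrow> 'a \<Rightarrow> nat" where
  "degree V E v = card (neighbors V E v)"

definition min_degree :: "'a set \<Rightarrow> ('a \<Rightarrow> 'a \<Rightarrow> bool) \<Rightarrow> nat" where
  "min_degree V E = Min (degree V E ` V)"

definition dominating :: "'a set \<Rightarrow> ('a \<Rightarrow> 'a \<Rightarrow> bool) \<Rightarrow> 'a set \<Rightarrow> bool" where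
  "dominating V E D \<longleftrightarrow> D \<subseteq> V \<and> (\<forall>v \<in> V - D. \<exists>u \<in> D. E v u)"

definition certified_dominating :: "'a set \<Rightarrow> ('a \<Rightarrow> 'a \<Rightarrow> bool) \<Rightarrow> 'a set \<Rightarrow> bool" where
  "certified_dominating V E D \<longleftrightarrow> dominating V E D \<and>
     (\<forall>v \<in> D. card (neighbors V E v \<inter> (V - D)) = 0 \<or> card (neighbors V E v \<inter> (V - D)) \<ge> 2)"

definition minimal_wrt :: "('a set \<Rightarrow> bool) \<Rightarrow> 'a set \<Rightarrow> bool" where
  "minimal_wrt P D \<longleftrightarrow> P D \<and> (\<forall>D'. D' \<subset> D \<longrightarrow> \<not> P D')"

definition upper_domination :: "'a set \<Rightarrow> ('a \<Rightarrow> 'a \<Rightarrow> bool) \<Rightarrow> nat" where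
  "upper_domination V E = Max (card ` {D. minimal_wrt (dominating V E) D})"

definition upper_cert_domination :: "'a set \<Rightarrow> ('a \<Rightarrow> 'a \<Rightarrow> bool) \<Rightarrow> nat" where
  "upper_cert_domination V E = Max (card ` {D. minimal_wrt (certified_dominating V E) D})"

end

theory Submission
  imports Defs
begin

text \<open>
  It suffices to show that a minimal certified dominating set \<open>D\<close> is a minimal dominating set.
  First, every vertex of \<open>D\<close> has a neighbour outside \<open>D\<close>: otherwise the set \<open>A\<close> of vertices of
  \<open>D\<close> without such neighbours is nonempty, and a smallest nonempty \<open>X \<subseteq> A\<close> such that no vertex
  of \<open>A - X\<close> has exactly one neighbour in \<open>X\<close> can be deleted from \<open>D\<close>; minimum degree 2 forces
  every vertex of \<open>X\<close> to have a neighbour in \<open>D - X\<close>, so \<open>D - X\<close> is still certified dominating.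
  Once every vertex of \<open>D\<close> has at least two neighbours outside \<open>D\<close>, deleting any single vertex
  keeps the certification condition; so if a proper subset of \<open>D\<close> were dominating, \<open>D\<close> minus
  a vertex outside it would be a smaller certified dominating set.
\<close>

lemma simple_graph_finite: "simple_graph V E \<Longrightarrow> finite V"
  unfolding simple_graph_def by blast

lemma simple_graph_sym: "simple_graph V E \<Longrightarrow> E u v \<Longrightarrow> E v u"
  unfolding simple_graph_def by blast

lemma simple_graph_irrefl: "simple_graph V E \<Longrightarrow> \<not> E v v"
  unfolding simple_graph_def by blast

lemma finite_neighbors: "simple_graph V E \<Longrightarrow> finite (neighbors V E v)"
  unfolding neighbors_def by (simp add: simple_graph_finite)

lemma min_degree_le_degree: "simple_graph V E \<Longrightarrow> v \<in> V \<Longrightarrow> min_degree V E \<le> degree V E v"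
  unfolding min_degree_def by (simp add: simple_graph_finite)

lemma dominating_superset:
  "dominating V E D' \<Longrightarrow> D' \<subseteq> D \<Longrightarrow> D \<subseteq> V \<Longrightarrow> dominating V E D"
  unfolding dominating_def by blast

lemma ex_minimal_wrt_subset:
  assumes "finite S" "P S"
  shows "\<exists>D \<subseteq> S. minimal_wrt P D"
proof -
  obtain D where D: "P D" "D \<subseteq> S" and least: "\<And>D'. P D' \<and> D' \<subseteq> S \<Longrightarrow> card D \<le> card D'"
    using ex_has_least_nat[of "\<lambda>D. P D \<and> D \<subseteq> S" S card] assms by blast
  have "\<not> P D'" if "D' \<subset> D" for D'
    using least[of D'] psubset_card_mono[OF finite_subset[OF D(2) assms(1)] that] that D(2) by auto
  then show ?thesis
    using D unfolding minimal_wrt_def by blast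
qed

lemma certified_dominating_Diff:
  assumes sg: "simple_graph V E" and cert: "certified_dominating V E D" and "X \<subseteq> D"
    and dom: "dominating V E (D - X)"
    and unique: "\<And>y. y \<in> D - X \<Longrightarrow> neighbors V E y \<inter> (V - D) = {} \<Longrightarrow>
                     card (neighbors V E y \<inter> X) \<noteq> 1"
  shows "certified_dominating V E (D - X)"
  unfolding certified_dominating_def
proof (intro conjI dom ballI)
  fix y assume y: "y \<in> D - X"
  let ?N = "neighbors V E y"
  have "D \<subseteq> V"
    using cert unfolding certified_dominating_def dominating_def by blast
  then have split: "?N \<inter> (V - (D - X)) = ?N \<inter> (V - D) \<union> ?N \<inter> X"
    using \<open>X \<subseteq> D\<close> by blast
  have fin: "finite (?N \<inter> S)" for S
    using finite_neighbors[OF sg] by blast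
  have "card (?N \<inter> (V - D)) = 0 \<or> card (?N \<inter> (V - D)) \<ge> 2"
    using cert y unfolding certified_dominating_def by blast
  then consider "?N \<inter> (V - D) = {}" | "card (?N \<inter> (V - D)) \<ge> 2"
    using fin by fastforce
  then show "card (?N \<inter> (V - (D - X))) = 0 \<or> card (?N \<inter> (V - (D - X))) \<ge> 2"
  proof cases
    case 1
    then show ?thesis
      using split unique[OF y] by auto
  next
    case 2
    moreover have "card (?N \<inter> (V - D)) \<le> card (?N \<inter> (V - (D - X)))"
      using split fin by (intro card_mono) auto
    ultimately show ?thesis by linarith
  qed
qed

lemma ex_nonempty_subset_with_outside_neighbors:
  assumes sg: "simple_graph V E" and "A \<subseteq> V" "A \<noteq> {}"
    and deg: "\<And>v. v \<in> A \<Longrightarrow> card (neighbors V E v) \<ge> 2"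
  shows "\<exists>X \<subseteq> A. X \<noteq> {} \<and> (\<forall>y \<in> A - X. card (neighbors V E y \<inter> X) \<noteq> 1)
                 \<and> (\<forall>x \<in> X. \<not> neighbors V E x \<subseteq> X)"
proof -
  define P where "P X \<longleftrightarrow> X \<subseteq> A \<and> X \<noteq> {} \<and> (\<forall>y \<in> A - X. card (neighbors V E y \<inter> X) \<noteq> 1)"
    for X
  have "P A"
    using \<open>A \<noteq> {}\<close> unfolding P_def by blast
  then obtain X where PX: "P X" and least: "\<And>Y. P Y \<Longrightarrow> card X \<le> card Y"
    using ex_has_least_nat[of P A card] by blast
  have "finite X"
    using PX \<open>A \<subseteq> V\<close> simple_graph_finite[OF sg] unfolding P_def by (metis finite_subset)
  have "\<not> neighbors V E x \<subseteq> X" if x: "x \<in> X" for x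
  proof
    assume inside: "neighbors V E x \<subseteq> X"
    have x_nonadj: "x \<notin> neighbors V E x"
      using simple_graph_irrefl[OF sg] unfolding neighbors_def by blast
    have deg_x: "card (neighbors V E x) \<ge> 2"
      using deg x PX unfolding P_def by blast
    have "X - {x} \<noteq> {}"
    proof
      assume "X - {x} = {}"
      then have "neighbors V E x = {}"
        using inside x_nonadj by blast
      then show False
        using deg_x by simp
    qed
    moreover have "card (neighbors V E y \<inter> (X - {x})) \<noteq> 1" if y: "y \<in> A - (X - {x})" for y
    proof (cases "y = x")
      case True
      then have "neighbors V E y \<inter> (X - {x}) = neighbors V E x"
        using inside x_nonadj by blast
      then show ?thesis
        using deg_x by simp
    next
      case False
      with y have "y \<in> A - X"
        by blast
      then have "x \<notin> neighbors V E y"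
        using inside simple_graph_sym[OF sg] \<open>A \<subseteq> V\<close> unfolding neighbors_def by blast
      then have "neighbors V E y \<inter> (X - {x}) = neighbors V E y \<inter> X"
        by blast
      then show ?thesis
        using PX \<open>y \<in> A - X\<close> unfolding P_def by simp
    qed
    ultimately have "P (X - {x})"
      using PX unfolding P_def by blast
    then have "card X \<le> card (X - {x})"
      by (rule least)
    then show False
      using card_Diff1_less[OF \<open>finite X\<close> x] by linarith
  qed
  then show ?thesis
    using PX unfolding P_def by blast
qed

lemma minimal_certified_dominating_outside_neighbor:
  assumes sg: "simple_graph V E" and deg: "min_degree V E \<ge> 2"
    and min: "minimal_wrt (certified_dominating V E) D" and "v \<in> D"
  shows "neighbors V E v \<inter> (V - D) \<noteq> {}"
proof
  assume v_inside: "neighbors V E v \<inter> (V - D) = {}"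
  have cert: "certified_dominating V E D"
    using min unfolding minimal_wrt_def by blast
  then have dom: "dominating V E D" and "D \<subseteq> V"
    unfolding certified_dominating_def dominating_def by blast+
  define A where "A = {a \<in> D. neighbors V E a \<inter> (V - D) = {}}"
  have "A \<subseteq> V" "A \<noteq> {}"
    using \<open>D \<subseteq> V\<close> \<open>v \<in> D\<close> v_inside unfolding A_def by blast+
  moreover have "card (neighbors V E a) \<ge> 2" if "a \<in> A" for a
    using min_degree_le_degree[OF sg] deg that \<open>A \<subseteq> V\<close> unfolding degree_def by fastforce
  ultimately have "\<exists>X \<subseteq> A. X \<noteq> {} \<and> (\<forall>y \<in> A - X. card (neighbors V E y \<inter> X) \<noteq> 1)
                            \<and> (\<forall>x \<in> X. \<not> neighbors V E x \<subseteq> X)"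
    by (rule ex_nonempty_subset_with_outside_neighbors[OF sg])
  then obtain X where "X \<subseteq> A" "X \<noteq> {}"
    and unique: "\<forall>y \<in> A - X. card (neighbors V E y \<inter> X) \<noteq> 1"
    and outside: "\<forall>x \<in> X. \<not> neighbors V E x \<subseteq> X"
    by blast
  have "X \<subseteq> D"
    using \<open>X \<subseteq> A\<close> unfolding A_def by blast
  have "dominating V E (D - X)"
    unfolding dominating_def
  proof (intro conjI ballI)
    show "D - X \<subseteq> V"
      using \<open>D \<subseteq> V\<close> by blast
    fix w assume w: "w \<in> V - (D - X)"
    show "\<exists>u \<in> D - X. E w u"
    proof (cases "w \<in> X")
      case True
      then obtain u where "u \<in> neighbors V E w" "u \<notin> X"
        using outside by blast
      moreover have "neighbors V E w \<subseteq> D"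
        using True \<open>X \<subseteq> A\<close> unfolding A_def neighbors_def by blast
      ultimately show ?thesis
        unfolding neighbors_def by blast
    next
      case False
      then obtain u where u: "u \<in> D" "E w u"
        using w dom unfolding dominating_def by blast
      then have "w \<in> neighbors V E u \<inter> (V - D)"
        using w False simple_graph_sym[OF sg] unfolding neighbors_def by blast
      then have "u \<notin> X"
        using \<open>X \<subseteq> A\<close> unfolding A_def by blast
      then show ?thesis
        using u by blast
    qed
  qed
  then have "certified_dominating V E (D - X)"
    using certified_dominating_Diff[OF sg cert \<open>X \<subseteq> D\<close>] unique unfolding A_def by blast
  moreover have "D - X \<subset> D"
    using \<open>X \<subseteq> D\<close> \<open>X \<noteq> {}\<close> by blast
  ultimately show False
    using min unfolding minimal_wrt_def by blast
qed

lemma minimal_certified_imp_minimal_dominating: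
  assumes sg: "simple_graph V E" and deg: "min_degree V E \<ge> 2"
    and min: "minimal_wrt (certified_dominating V E) D"
  shows "minimal_wrt (dominating V E) D"
  unfolding minimal_wrt_def
proof (intro conjI allI impI notI)
  have cert: "certified_dominating V E D"
    using min unfolding minimal_wrt_def by blast
  then show dom: "dominating V E D"
    unfolding certified_dominating_def by blast
  fix D' assume "D' \<subset> D" and "dominating V E D'"
  then obtain v where v: "v \<in> D" "v \<notin> D'"
    by blast
  have "D \<subseteq> V"
    using dom unfolding dominating_def by blast
  then have "dominating V E (D - {v})"
    using dominating_superset[OF \<open>dominating V E D'\<close>, of "D - {v}"] \<open>D' \<subset> D\<close> v by blast
  then have "certified_dominating V E (D - {v})"
    using certified_dominating_Diff[OF sg cert] v
      minimal_certified_dominating_outside_neighbor[OF sg deg min] by blast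
  moreover have "D - {v} \<subset> D"
    using v by blast
  ultimately show False
    using min unfolding minimal_wrt_def by blast
qed

theorem lemma3p4:
  fixes V :: "'a set" and E :: "'a \<Rightarrow> 'a \<Rightarrow> bool"
  assumes "simple_graph V E"
    and "V \<noteq> {}"
    and "min_degree V E \<ge> 2"
  shows "upper_cert_domination V E \<le> upper_domination V E"
proof -
  have "finite V"
    using assms(1) by (rule simple_graph_finite)
  have "certified_dominating V E V"
    unfolding certified_dominating_def dominating_def by simp
  then have "{D. minimal_wrt (certified_dominating V E) D} \<noteq> {}"
    using ex_minimal_wrt_subset[OF \<open>finite V\<close>] by blast
  moreover have "{D. minimal_wrt (certified_dominating V E) D} \<subseteq> {D. minimal_wrt (dominating V E) D}"
    using minimal_certified_imp_minimal_dominating[OF assms(1,3)] by blast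
  moreover have "{D. minimal_wrt (dominating V E) D} \<subseteq> Pow V"
    unfolding minimal_wrt_def dominating_def by blast
  then have "finite (card ` {D. minimal_wrt (dominating V E) D})"
    using \<open>finite V\<close> by (meson finite_Pow_iff finite_imageI finite_subset)
  ultimately show ?thesis
    unfolding upper_cert_domination_def upper_domination_def
    by (intro Max_mono image_mono) auto
qed

end
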